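(* Let $(\mathcal C,\otimes,\mathbb 1,c)$ be a symmetric monoidal category and $(H,m,u,\underline\Delta,\underline\varepsilon,S,S^{-1},\Lambda,\lambda,\phi,\theta)$ an extended Hopf algebra in $\mathcal C$. Then $(\phi,\theta)$ is an extended structure on the Frobenius algebra $(H,m,u,\Delta,\varepsilon)$, where $\Delta=(m\otimes S)(\mathrm{id}_H\otimes\underline\Delta\Lambda)$ and $\varepsilon=\lambda$.
   Context: Monoidal categories are taken strict. A Hopf algebra in $\mathcal C$ is $(H,m,u,\underline\Delta,\underline\varepsilon,S)$: an associative unital algebra and coassociative counital coalgebra with $\underline\Delta,\underline\varepsilon$ algebra morphisms and $m(S\otimes\mathrm{id})\underline\Delta=u\underline\varepsilon=m(\mathrm{id}\otimes S)\underline\Delta$. A left integral $\Lambda:\mathbb 1\to H$ satisfies $m(\mathrm{id}\otimes\Lambda)=\Lambda\underline\varepsilon$; a right cointegral $\lambda:H\to\mathbb 1$ satisfies $(\lambda\otimes\mathrm{id})\underline\Delta=u\lambda$; normalized means $\lambda\Lambda=\mathrm{id}_{\mathbb 1}$. An integral Hopf algebra has invertible antipode and a normalized pair. A morphism of integral Hopf algebras is an algebra and coalgebra morphism $f$ with $f\Lambda_H=\Lambda_K$, $\lambda_Kf=\lambda_H$ (and compatible with the antipodes). An extended Hopf algebra is an integral Hopf algebra with $\phi:H\to H$, $\theta:\mathbb 1\to H$ such that (i) $\phi$ is a morphism of integral Hopf algebras with $\phi^2=\mathrm{id}_H$; (ii) $\phi m(\theta\otimes\mathrm{id}_H)=m(\theta\otimes\mathrm{id}_H)$;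 (iii) $m(\phi\otimes S)\underline\Delta\Lambda=m(\theta\otimes\theta)$. For a Frobenius algebra $(A,m,u,\Delta,\varepsilon)$, an extended structure is $(\phi,\theta)$ with (i) $\phi$ a Frobenius algebra morphism (preserving $m,u,\Delta,\varepsilon$), $\phi^2=\mathrm{id}$; (ii) $\phi m(\theta\otimes\mathrm{id})=m(\theta\otimes\mathrm{id})$; (iii) $m(\phi\otimes\mathrm{id})\Delta u=m(\theta\otimes\theta)$. *)

theory Defs
  imports Main
begin

text \<open>A (strict) monoidal category with braiding, given by raw data:
objects, hom-sets, composition (Cmp C g f means g after f), identities,
tensor on objects and on morphisms, unit object and braiding.\<close>

record ('o, 'm) smc =
  Obj :: "'o set"
  Hom :: "'o \<Rightarrow> 'o \<Rightarrow> 'm set"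
  Cmp :: "'m \<Rightarrow> 'm \<Rightarrow> 'm"
  Idm  :: "'o \<Rightarrow> 'm"
  TO  :: "'o \<Rightarrow> 'o \<Rightarrow> 'o"
  TM  :: "'m \<Rightarrow> 'm \<Rightarrow> 'm"
  Uo  :: "'o"
  Br  :: "'o \<Rightarrow> 'o \<Rightarrow> 'm"

definition strict_symmetric_monoidal_category :: "('o, 'm) smc \<Rightarrow> bool" where
  "strict_symmetric_monoidal_category C \<longleftrightarrow>
     (\<forall>A B f. f \<in> Hom C A B \<longrightarrow> A \<in> Obj C \<and> B \<in> Obj C) \<and>
     (\<forall>A \<in> Obj C. Idm C A \<in> Hom C A A) \<and>
     (\<forall>A B D f g. f \<in> Hom C A B \<longrightarrow> g \<in> Hom C B D \<longrightarrow> Cmp C g f \<in> Hom C A D) \<and>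
     (\<forall>A B D E f g h. f \<in> Hom C A B \<longrightarrow> g \<in> Hom C B D \<longrightarrow> h \<in> Hom C D E \<longrightarrow>
        Cmp C h (Cmp C g f) = Cmp C (Cmp C h g) f) \<and>
     (\<forall>A B f. f \<in> Hom C A B \<longrightarrow> Cmp C (Idm C B) f = f \<and> Cmp C f (Idm C A) = f) \<and>
     Uo C \<in> Obj C \<and>
     (\<forall>A \<in> Obj C. \<forall>B \<in> Obj C. TO C A B \<in> Obj C) \<and>
     (\<forall>A B A' B' f g. f \<in> Hom C A B \<longrightarrow> g \<in> Hom C A' B' \<longrightarrow>
        TM C f g \<in> Hom C (TO C A A') (TO C B B')) \<and>
     (\<forall>A \<in> Obj C. \<forall>B \<in> Obj C. TM C (Idm C A) (Idm C B) = Idm C (TO C A B)) \<and>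
     (\<forall>A B D A' B' D' f g f' g'. f \<in> Hom C A B \<longrightarrow> g \<in> Hom C B D \<longrightarrow>
        f' \<in> Hom C A' B' \<longrightarrow> g' \<in> Hom C B' D' \<longrightarrow>
        TM C (Cmp C g f) (Cmp C g' f') = Cmp C (TM C g g') (TM C f f')) \<and>
     (\<forall>A \<in> Obj C. \<forall>B \<in> Obj C. \<forall>D \<in> Obj C. TO C (TO C A B) D = TO C A (TO C B D)) \<and>
     (\<forall>A \<in> Obj C. TO C (Uo C) A = A \<and> TO C A (Uo C) = A) \<and>
     (\<forall>A B A' B' A'' B'' f g h. f \<in> Hom C A B \<longrightarrow> g \<in> Hom C A' B' \<longrightarrow> h \<in> Hom C A'' B'' \<longrightarrow>
        TM C (TM C f g) h = TM C f (TM C g h)) \<and>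
     (\<forall>A B f. f \<in> Hom C A B \<longrightarrow> TM C (Idm C (Uo C)) f = f \<and> TM C f (Idm C (Uo C)) = f) \<and>
     (\<forall>A \<in> Obj C. \<forall>B \<in> Obj C. Br C A B \<in> Hom C (TO C A B) (TO C B A)) \<and>
     (\<forall>A B A' B' f g. f \<in> Hom C A B \<longrightarrow> g \<in> Hom C A' B' \<longrightarrow>
        Cmp C (Br C B B') (TM C f g) = Cmp C (TM C g f) (Br C A A')) \<and>
     (\<forall>A \<in> Obj C. \<forall>B \<in> Obj C. \<forall>D \<in> Obj C.
        Br C A (TO C B D) = Cmp C (TM C (Idm C B) (Br C A D)) (TM C (Br C A B) (Idm C D)) \<and>
        Br C (TO C A B) D = Cmp C (TM C (Br C A D) (Idm C B)) (TM C (Idm C A) (Br C B D))) \<and>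
     (\<forall>A \<in> Obj C. \<forall>B \<in> Obj C. Cmp C (Br C B A) (Br C A B) = Idm C (TO C A B))"

definition is_algebra :: "('o, 'm) smc \<Rightarrow> 'o \<Rightarrow> 'm \<Rightarrow> 'm \<Rightarrow> bool" where
  "is_algebra C H m u \<longleftrightarrow>
     H \<in> Obj C \<and> m \<in> Hom C (TO C H H) H \<and> u \<in> Hom C (Uo C) H \<and>
     Cmp C m (TM C m (Idm C H)) = Cmp C m (TM C (Idm C H) m) \<and>
     Cmp C m (TM C u (Idm C H)) = Idm C H \<and>
     Cmp C m (TM C (Idm C H) u) = Idm C H"

definition is_coalgebra :: "('o, 'm) smc \<Rightarrow> 'o \<Rightarrow> 'm \<Rightarrow> 'm \<Rightarrow> bool" where
  "is_coalgebra C H d e \<longleftrightarrow>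
     H \<in> Obj C \<and> d \<in> Hom C H (TO C H H) \<and> e \<in> Hom C H (Uo C) \<and>
     Cmp C (TM C d (Idm C H)) d = Cmp C (TM C (Idm C H) d) d \<and>
     Cmp C (TM C e (Idm C H)) d = Idm C H \<and>
     Cmp C (TM C (Idm C H) e) d = Idm C H"

definition is_hopf_algebra ::
  "('o, 'm) smc \<Rightarrow> 'o \<Rightarrow> 'm \<Rightarrow> 'm \<Rightarrow> 'm \<Rightarrow> 'm \<Rightarrow> 'm \<Rightarrow> bool" where
  "is_hopf_algebra C H m u d e S \<longleftrightarrow>
     is_algebra C H m u \<and> is_coalgebra C H d e \<and> S \<in> Hom C H H \<and>
     Cmp C d m = Cmp C (TM C m m)
        (Cmp C (TM C (Idm C H) (TM C (Br C H H) (Idm C H))) (TM C d d)) \<and>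
     Cmp C d u = TM C u u \<and>
     Cmp C e m = TM C e e \<and>
     Cmp C e u = Idm C (Uo C) \<and>
     Cmp C m (Cmp C (TM C S (Idm C H)) d) = Cmp C u e \<and>
     Cmp C m (Cmp C (TM C (Idm C H) S) d) = Cmp C u e"

definition is_integral_hopf_algebra ::
  "('o, 'm) smc \<Rightarrow> 'o \<Rightarrow> 'm \<Rightarrow> 'm \<Rightarrow> 'm \<Rightarrow> 'm \<Rightarrow> 'm \<Rightarrow> 'm \<Rightarrow> 'm \<Rightarrow> 'm \<Rightarrow> bool" where
  "is_integral_hopf_algebra C H m u d e S Si Lam lam \<longleftrightarrow>
     is_hopf_algebra C H m u d e S \<and>
     Si \<in> Hom C H H \<and> Cmp C S Si = Idm C H \<and> Cmp C Si S = Idm C H \<and>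
     Lam \<in> Hom C (Uo C) H \<and> lam \<in> Hom C H (Uo C) \<and>
     Cmp C m (TM C (Idm C H) Lam) = Cmp C Lam e \<and>
     Cmp C (TM C lam (Idm C H)) d = Cmp C u lam \<and>
     Cmp C lam Lam = Idm C (Uo C)"

definition is_integral_hopf_endo ::
  "('o, 'm) smc \<Rightarrow> 'o \<Rightarrow> 'm \<Rightarrow> 'm \<Rightarrow> 'm \<Rightarrow> 'm \<Rightarrow> 'm \<Rightarrow> 'm \<Rightarrow> 'm \<Rightarrow> 'm \<Rightarrow> bool" where
  "is_integral_hopf_endo C H m u d e S Lam lam f \<longleftrightarrow>
     f \<in> Hom C H H \<and>
     Cmp C f m = Cmp C m (TM C f f) \<and> Cmp C f u = u \<and>
     Cmp C d f = Cmp C (TM C f f) d \<and> Cmp C e f = e \<and>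
     Cmp C f Lam = Lam \<and> Cmp C lam f = lam \<and>
     Cmp C f S = Cmp C S f"

definition is_extended_hopf_algebra ::
  "('o, 'm) smc \<Rightarrow> 'o \<Rightarrow> 'm \<Rightarrow> 'm \<Rightarrow> 'm \<Rightarrow> 'm \<Rightarrow> 'm \<Rightarrow> 'm \<Rightarrow> 'm \<Rightarrow> 'm
     \<Rightarrow> 'm \<Rightarrow> 'm \<Rightarrow> bool" where
  "is_extended_hopf_algebra C H m u d e S Si Lam lam phi theta \<longleftrightarrow>
     is_integral_hopf_algebra C H m u d e S Si Lam lam \<and>
     phi \<in> Hom C H H \<and> theta \<in> Hom C (Uo C) H \<and>
     is_integral_hopf_endo C H m u d e S Lam lam phi \<and>
     Cmp C phi phi = Idm C H \<and>
     Cmp C phi (Cmp C m (TM C theta (Idm C H))) = Cmp C m (TM C theta (Idm C H)) \<and>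
     Cmp C m (Cmp C (TM C phi S) (Cmp C d Lam)) = Cmp C m (TM C theta theta)"

definition is_frobenius_algebra ::
  "('o, 'm) smc \<Rightarrow> 'o \<Rightarrow> 'm \<Rightarrow> 'm \<Rightarrow> 'm \<Rightarrow> 'm \<Rightarrow> bool" where
  "is_frobenius_algebra C A m u d e \<longleftrightarrow>
     is_algebra C A m u \<and> is_coalgebra C A d e \<and>
     Cmp C (TM C (Idm C A) m) (TM C d (Idm C A)) = Cmp C d m \<and>
     Cmp C (TM C m (Idm C A)) (TM C (Idm C A) d) = Cmp C d m"

definition is_extended_frobenius_structure ::
  "('o, 'm) smc \<Rightarrow> 'o \<Rightarrow> 'm \<Rightarrow> 'm \<Rightarrow> 'm \<Rightarrow> 'm \<Rightarrow> 'm \<Rightarrow> 'm \<Rightarrow> bool" where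
  "is_extended_frobenius_structure C A m u d e phi theta \<longleftrightarrow>
     is_frobenius_algebra C A m u d e \<and>
     phi \<in> Hom C A A \<and> theta \<in> Hom C (Uo C) A \<and>
     Cmp C phi m = Cmp C m (TM C phi phi) \<and> Cmp C phi u = u \<and>
     Cmp C d phi = Cmp C (TM C phi phi) d \<and> Cmp C e phi = e \<and>
     Cmp C phi phi = Idm C A \<and>
     Cmp C phi (Cmp C m (TM C theta (Idm C A))) = Cmp C m (TM C theta (Idm C A)) \<and>
     Cmp C m (Cmp C (TM C phi (Idm C A)) (Cmp C d u)) = Cmp C m (TM C theta theta)"

end

theory Submission
  imports Defs
begin

text \<open>
The Galois map \<open>\<Phi>' = (id \<otimes> m)(\<Delta> \<otimes> id)\<close> of a Hopf algebra is invertible with inverse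
\<open>\<Phi> = (id \<otimes> m)(id \<otimes> S \<otimes> id)(\<Delta> \<otimes> id)\<close>.  For the Frobenius coproduct
\<open>\<Delta>\<^sub>F = (m \<otimes> S)(id \<otimes> \<Delta>\<Lambda>)\<close> the integral property of \<open>\<Lambda>\<close> gives \<open>\<Phi>' \<Delta>\<^sub>F = \<Lambda> \<otimes> id\<close>,
hence \<open>\<Delta>\<^sub>F = \<Phi>(\<Lambda> \<otimes> id) = (id \<otimes> m)(X \<otimes> id)\<close> with \<open>X = (id \<otimes> S)\<Delta>\<Lambda> = \<Delta>\<^sub>F u\<close>, and
also \<open>\<Delta>\<^sub>F = (m \<otimes> id)(id \<otimes> X)\<close>.  With these two forms the Frobenius relations and
coassociativity of \<open>\<Delta>\<^sub>F\<close> reduce to associativity of \<open>m\<close>; the counit laws for \<open>\<lambda>\<close>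
follow from the cointegral property and \<open>\<lambda>\<Lambda> = 1\<close>.  A Hopf algebra morphism \<open>\<phi>\<close> fixing \<open>\<Lambda>\<close>
commutes with \<open>\<Delta>\<^sub>F\<close>, and \<open>m(\<phi> \<otimes> id)\<Delta>\<^sub>F u = m(\<phi> \<otimes> S)\<Delta>\<Lambda>\<close> turns condition (iii) of an
extended Hopf algebra into condition (iii) of an extended Frobenius structure.
\<close>

section \<open>Arrows between tensor powers\<close>

text \<open>Morphisms \<open>H\<^sup>\<otimes>\<^sup>i \<rightarrow> H\<^sup>\<otimes>\<^sup>j\<close> are tagged with their arities, so that the strictness of
the tensor product becomes arithmetic on the tags.\<close>
datatype 'm arr = Arr (src: nat) (tgt: nat) (mor: 'm)

locale tensor_powers =
  fixes C :: "('o,'m) smc" and H :: 'o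
  assumes ssmc: "strict_symmetric_monoidal_category C" and H_obj: "H \<in> Obj C"
begin

lemma
  shows Idm_hom: "A \<in> Obj C \<Longrightarrow> Idm C A \<in> Hom C A A"
    and Cmp_hom: "f \<in> Hom C A B \<Longrightarrow> g \<in> Hom C B D \<Longrightarrow> Cmp C g f \<in> Hom C A D"
    and Cmp_assoc: "f \<in> Hom C A B \<Longrightarrow> g \<in> Hom C B D \<Longrightarrow> h \<in> Hom C D E \<Longrightarrow>
        Cmp C h (Cmp C g f) = Cmp C (Cmp C h g) f"
    and Cmp_Idm_left: "f \<in> Hom C A B \<Longrightarrow> Cmp C (Idm C B) f = f"
    and Cmp_Idm_right: "f \<in> Hom C A B \<Longrightarrow> Cmp C f (Idm C A) = f"
    and Uo_obj: "Uo C \<in> Obj C"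
    and TO_obj: "A \<in> Obj C \<Longrightarrow> B \<in> Obj C \<Longrightarrow> TO C A B \<in> Obj C"
    and TM_hom: "f \<in> Hom C A B \<Longrightarrow> g \<in> Hom C A' B' \<Longrightarrow>
        TM C f g \<in> Hom C (TO C A A') (TO C B B')"
    and TM_Idm: "A \<in> Obj C \<Longrightarrow> B \<in> Obj C \<Longrightarrow> TM C (Idm C A) (Idm C B) = Idm C (TO C A B)"
    and TM_Cmp: "f \<in> Hom C A B \<Longrightarrow> g \<in> Hom C B D \<Longrightarrow> f' \<in> Hom C A' B' \<Longrightarrow> g' \<in> Hom C B' D' \<Longrightarrow>
        TM C (Cmp C g f) (Cmp C g' f') = Cmp C (TM C g g') (TM C f f')"
    and TO_assoc: "A \<in> Obj C \<Longrightarrow> B \<in> Obj C \<Longrightarrow> D \<in> Obj C \<Longrightarrow>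
        TO C (TO C A B) D = TO C A (TO C B D)"
    and TO_Uo: "A \<in> Obj C \<Longrightarrow> TO C (Uo C) A = A" "A \<in> Obj C \<Longrightarrow> TO C A (Uo C) = A"
    and TM_assoc: "f \<in> Hom C A B \<Longrightarrow> g \<in> Hom C A' B' \<Longrightarrow> h \<in> Hom C A'' B'' \<Longrightarrow>
        TM C (TM C f g) h = TM C f (TM C g h)"
    and TM_Idm_Uo_left: "f \<in> Hom C A B \<Longrightarrow> TM C (Idm C (Uo C)) f = f"
    and TM_Idm_Uo_right: "f \<in> Hom C A B \<Longrightarrow> TM C f (Idm C (Uo C)) = f"
    and Br_hom: "A \<in> Obj C \<Longrightarrow> B \<in> Obj C \<Longrightarrow> Br C A B \<in> Hom C (TO C A B) (TO C B A)"
    and Br_natural: "f \<in> Hom C A B \<Longrightarrow> g \<in> Hom C A' B' \<Longrightarrow>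
        Cmp C (Br C B B') (TM C f g) = Cmp C (TM C g f) (Br C A A')"
    and Br_hexagon: "A \<in> Obj C \<Longrightarrow> B \<in> Obj C \<Longrightarrow> D \<in> Obj C \<Longrightarrow>
        Br C A (TO C B D) = Cmp C (TM C (Idm C B) (Br C A D)) (TM C (Br C A B) (Idm C D))"
    and Br_symmetric: "A \<in> Obj C \<Longrightarrow> B \<in> Obj C \<Longrightarrow> Cmp C (Br C B A) (Br C A B) = Idm C (TO C A B)"
  using ssmc[unfolded strict_symmetric_monoidal_category_def] by auto

primrec pow :: "nat \<Rightarrow> 'o" where
  "pow 0 = Uo C"
| "pow (Suc n) = TO C H (pow n)"

lemma pow_obj[simp]: "pow n \<in> Obj C"
  by (induction n) (auto simp: Uo_obj TO_obj H_obj)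

lemma TO_pow: "TO C (pow a) (pow b) = pow (a + b)"
  by (induction a) (auto simp: TO_Uo TO_assoc H_obj)

lemma pow_Suc_0[simp]: "pow (Suc 0) = H"
  by (simp add: TO_Uo H_obj)

lemma pow_2: "pow 2 = TO C H H"
  by (simp add: numeral_2_eq_2 TO_Uo H_obj)

lemma Suc_Suc_0_eq_2[simp]: "Suc (Suc 0) = 2"
  by simp

declare pow.simps(2)[simp del]

definition acomp :: "'m arr \<Rightarrow> 'm arr \<Rightarrow> 'm arr" (infixr "\<odot>" 55) where
  "y \<odot> x = Arr (src x) (tgt y) (Cmp C (mor y) (mor x))"
definition atens :: "'m arr \<Rightarrow> 'm arr \<Rightarrow> 'm arr" (infixr "\<boxtimes>" 60) where
  "x \<boxtimes> y = Arr (src x + src y) (tgt x + tgt y) (TM C (mor x) (mor y))"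
definition typed :: "'m arr \<Rightarrow> bool" where
  "typed x \<longleftrightarrow> mor x \<in> Hom C (pow (src x)) (pow (tgt x))"
definition ida :: "nat \<Rightarrow> 'm arr" where
  "ida n = Arr n n (Idm C (pow n))"
definition braid :: "nat \<Rightarrow> nat \<Rightarrow> 'm arr" where
  "braid a b = Arr (a + b) (b + a) (Br C (pow a) (pow b))"

lemma src_tgt_simps[simp]:
  "src (y \<odot> x) = src x" "tgt (y \<odot> x) = tgt y"
  "src (x \<boxtimes> y) = src x + src y" "tgt (x \<boxtimes> y) = tgt x + tgt y"
  "src (ida n) = n" "tgt (ida n) = n" "src (braid a b) = a + b" "tgt (braid a b) = b + a"
  by (simp_all add: acomp_def atens_def ida_def braid_def)

lemma mor_simps[simp]:
  "mor (y \<odot> x) = Cmp C (mor y) (mor x)" "mor (x \<boxtimes> y) = TM C (mor x) (mor y)"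
  "mor (ida n) = Idm C (pow n)"
  by (simp_all add: acomp_def atens_def ida_def)

lemma typed_acomp[simp]: "typed x \<Longrightarrow> typed y \<Longrightarrow> tgt x = src y \<Longrightarrow> typed (y \<odot> x)"
  unfolding typed_def using Cmp_hom by auto
lemma typed_atens[simp]: "typed x \<Longrightarrow> typed y \<Longrightarrow> typed (x \<boxtimes> y)"
  unfolding typed_def using TM_hom TO_pow by (metis mor_simps(2) src_tgt_simps(3,4))
lemma typed_ida[simp]: "typed (ida n)"
  unfolding typed_def using Idm_hom by auto
lemma typed_braid[simp]: "typed (braid a b)"
  unfolding typed_def braid_def using Br_hom TO_pow by (metis pow_obj arr.sel)

lemma arr_eqI: "src x = src y \<Longrightarrow> tgt x = tgt y \<Longrightarrow> mor x = mor y \<Longrightarrow> x = y"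
  by (cases x; cases y) auto

lemma acomp_assoc: "typed x \<Longrightarrow> typed y \<Longrightarrow> typed z \<Longrightarrow> tgt x = src y \<Longrightarrow> tgt y = src z \<Longrightarrow>
   (z \<odot> y) \<odot> x = z \<odot> (y \<odot> x)"
  unfolding typed_def acomp_def using Cmp_assoc by auto
lemma ida_acomp: "typed x \<Longrightarrow> n = tgt x \<Longrightarrow> ida n \<odot> x = x"
  unfolding typed_def acomp_def ida_def using Cmp_Idm_left by (cases x) auto
lemma acomp_ida: "typed x \<Longrightarrow> n = src x \<Longrightarrow> x \<odot> ida n = x"
  unfolding typed_def acomp_def ida_def using Cmp_Idm_right by (cases x) auto
lemma interchange: "typed f \<Longrightarrow> typed g \<Longrightarrow> typed f' \<Longrightarrow> typed g' \<Longrightarrow> tgt f = src g \<Longrightarrow> tgt f' = src g' \<Longrightarrow>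
   (g \<boxtimes> g') \<odot> (f \<boxtimes> f') = (g \<odot> f) \<boxtimes> (g' \<odot> f')"
  unfolding typed_def acomp_def atens_def using TM_Cmp by auto
lemma atens_assoc: "typed x \<Longrightarrow> typed y \<Longrightarrow> typed z \<Longrightarrow> (x \<boxtimes> y) \<boxtimes> z = x \<boxtimes> (y \<boxtimes> z)"
  unfolding typed_def atens_def using TM_assoc by auto
lemma ida_atens_ida: "ida a \<boxtimes> ida b = ida (a + b)"
  unfolding atens_def ida_def using TM_Idm TO_pow by simp
lemma ida0_atens: "typed x \<Longrightarrow> ida 0 \<boxtimes> x = x"
  unfolding typed_def atens_def ida_def using TM_Idm_Uo_left by (cases x) auto
lemma atens_ida0: "typed x \<Longrightarrow> x \<boxtimes> ida 0 = x"
  unfolding typed_def atens_def ida_def using TM_Idm_Uo_right by (cases x) auto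
lemma braid_natural: "typed f \<Longrightarrow> typed g \<Longrightarrow> b = tgt f \<Longrightarrow> b' = tgt g \<Longrightarrow>
   braid b b' \<odot> (f \<boxtimes> g) = (g \<boxtimes> f) \<odot> braid (src f) (src g)"
  unfolding typed_def acomp_def atens_def braid_def using Br_natural by auto
lemma braid_symmetric: "braid b a \<odot> braid a b = ida (a + b)"
  unfolding acomp_def braid_def ida_def using Br_symmetric TO_pow by simp
lemma braid_hexagon: "braid a (b + k) = (ida b \<boxtimes> braid a k) \<odot> (braid a b \<boxtimes> ida k)"
  unfolding acomp_def braid_def ida_def atens_def using Br_hexagon[of "pow a" "pow b" "pow k"]
  by (simp add: TO_pow add.assoc add.commute add.left_commute)

text \<open>A braiding with the unit object is an idempotent isomorphism.\<close>
lemma braid_0_right: "braid a 0 = ida a"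
proof -
  have idem: "braid a 0 = braid a 0 \<odot> braid a 0"
    using braid_hexagon[of a 0 0] by (simp add: ida0_atens atens_ida0)
  have inv: "braid 0 a \<odot> braid a 0 = ida a" using braid_symmetric[of 0 a] by simp
  have "ida a = braid 0 a \<odot> (braid a 0 \<odot> braid a 0)" using idem inv by simp
  also have "\<dots> = braid a 0"
    using inv ida_acomp[of "braid a 0" a] by (simp add: acomp_assoc[symmetric])
  finally show ?thesis by simp
qed

lemma interchange_ctx: "typed f \<Longrightarrow> typed g \<Longrightarrow> typed f' \<Longrightarrow> typed g' \<Longrightarrow> typed r \<Longrightarrow>
   tgt f = src g \<Longrightarrow> tgt f' = src g' \<Longrightarrow> tgt r = src f + src f' \<Longrightarrow>
   (g \<boxtimes> g') \<odot> ((f \<boxtimes> f') \<odot> r) = ((g \<odot> f) \<boxtimes> (g' \<odot> f')) \<odot> r"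
  by (simp add: acomp_assoc[symmetric] interchange)
lemma ida_atens_assoc: "typed x \<Longrightarrow> ida a \<boxtimes> (ida b \<boxtimes> x) = ida (a + b) \<boxtimes> x"
  using atens_assoc[of "ida a" "ida b" x] ida_atens_ida by simp

lemma atens_acomp_ida_atens:
  assumes "typed g" "typed G" "typed F" "src g \<le> n" "src G = n - src g + tgt F"
  shows "(g \<boxtimes> G) \<odot> (ida n \<boxtimes> F) = g \<boxtimes> (G \<odot> (ida (n - src g) \<boxtimes> F))"
proof -
  have "ida n = ida (src g) \<boxtimes> ida (n - src g)" using assms(4) by (simp add: ida_atens_ida)
  then have "(g \<boxtimes> G) \<odot> (ida n \<boxtimes> F) = (g \<boxtimes> G) \<odot> (ida (src g) \<boxtimes> (ida (n - src g) \<boxtimes> F))"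
    using assms by (simp add: atens_assoc)
  also have "\<dots> = g \<boxtimes> (G \<odot> (ida (n - src g) \<boxtimes> F))"
    using assms by (simp add: interchange acomp_ida)
  finally show ?thesis .
qed
lemma ida_atens_acomp_atens:
  assumes "typed f" "typed G" "typed F" "tgt f \<le> n" "tgt F = n - tgt f + src G"
  shows "(ida n \<boxtimes> G) \<odot> (f \<boxtimes> F) = f \<boxtimes> ((ida (n - tgt f) \<boxtimes> G) \<odot> F)"
proof -
  have "ida n = ida (tgt f) \<boxtimes> ida (n - tgt f)" using assms(4) by (simp add: ida_atens_ida)
  then have "(ida n \<boxtimes> G) \<odot> (f \<boxtimes> F) = (ida (tgt f) \<boxtimes> (ida (n - tgt f) \<boxtimes> G)) \<odot> (f \<boxtimes> F)"
    using assms by (simp add: atens_assoc)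
  also have "\<dots> = f \<boxtimes> ((ida (n - tgt f) \<boxtimes> G) \<odot> F)"
    using assms by (simp add: interchange ida_acomp)
  finally show ?thesis .
qed
lemma atens_acomp_ida_atens_ctx: "typed g \<Longrightarrow> typed G \<Longrightarrow> typed F \<Longrightarrow> typed r \<Longrightarrow>
   src g \<le> n \<Longrightarrow> src G = n - src g + tgt F \<Longrightarrow> tgt r = n + src F \<Longrightarrow>
   (g \<boxtimes> G) \<odot> ((ida n \<boxtimes> F) \<odot> r) = (g \<boxtimes> (G \<odot> (ida (n - src g) \<boxtimes> F))) \<odot> r"
  by (simp add: acomp_assoc[symmetric] atens_acomp_ida_atens)
lemma ida_atens_acomp_atens_ctx: "typed f \<Longrightarrow> typed G \<Longrightarrow> typed F \<Longrightarrow> typed r \<Longrightarrow>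
   tgt f \<le> n \<Longrightarrow> tgt F = n - tgt f + src G \<Longrightarrow> tgt r = src f + src F \<Longrightarrow>
   (ida n \<boxtimes> G) \<odot> ((f \<boxtimes> F) \<odot> r) = (f \<boxtimes> ((ida (n - tgt f) \<boxtimes> G) \<odot> F)) \<odot> r"
  by (simp add: acomp_assoc[symmetric] ida_atens_acomp_atens)

lemma absorb_effect_right: "typed g \<Longrightarrow> typed F \<Longrightarrow> tgt F = 0 \<Longrightarrow> n = src g \<Longrightarrow> g \<odot> (ida n \<boxtimes> F) = g \<boxtimes> F"
  using interchange[of "ida (src g)" g F "ida 0"] by (simp add: ida_acomp acomp_ida atens_ida0)
lemma absorb_effect_left: "typed g \<Longrightarrow> typed F \<Longrightarrow> tgt F = 0 \<Longrightarrow> n = src g \<Longrightarrow> g \<odot> (F \<boxtimes> ida n) = F \<boxtimes> g"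
  using interchange[of F "ida 0" "ida (src g)" g] by (simp add: ida_acomp acomp_ida ida0_atens)
lemma absorb_state_right: "typed f \<Longrightarrow> typed G \<Longrightarrow> src G = 0 \<Longrightarrow> n = tgt f \<Longrightarrow> (ida n \<boxtimes> G) \<odot> f = f \<boxtimes> G"
  using interchange[of f "ida (tgt f)" "ida 0" G] by (simp add: ida_acomp acomp_ida atens_ida0)
lemma absorb_state_left: "typed f \<Longrightarrow> typed G \<Longrightarrow> src G = 0 \<Longrightarrow> n = tgt f \<Longrightarrow> (G \<boxtimes> ida n) \<odot> f = G \<boxtimes> f"
  using interchange[of "ida 0" G f "ida (tgt f)"] by (simp add: ida_acomp acomp_ida ida0_atens)
lemma absorb_effect_right_ctx: "typed g \<Longrightarrow> typed F \<Longrightarrow> typed r \<Longrightarrow> tgt F = 0 \<Longrightarrow> n = src g \<Longrightarrow>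
   tgt r = n + src F \<Longrightarrow> g \<odot> ((ida n \<boxtimes> F) \<odot> r) = (g \<boxtimes> F) \<odot> r"
  by (simp add: acomp_assoc[symmetric] absorb_effect_right)
lemma absorb_effect_left_ctx: "typed g \<Longrightarrow> typed F \<Longrightarrow> typed r \<Longrightarrow> tgt F = 0 \<Longrightarrow> n = src g \<Longrightarrow>
   tgt r = src F + n \<Longrightarrow> g \<odot> ((F \<boxtimes> ida n) \<odot> r) = (F \<boxtimes> g) \<odot> r"
  by (simp add: acomp_assoc[symmetric] absorb_effect_left)

lemmas arrow_normalize = acomp_assoc atens_assoc ida_atens_ida ida_atens_assoc ida0_atens atens_ida0
  ida_acomp acomp_ida interchange interchange_ctx atens_acomp_ida_atens atens_acomp_ida_atens_ctx
  ida_atens_acomp_atens ida_atens_acomp_atens_ctx absorb_effect_right absorb_effect_left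
  absorb_effect_right_ctx absorb_effect_left_ctx

lemma acomp_eq_ctx: "A \<odot> B = A' \<odot> B' \<Longrightarrow> typed A \<Longrightarrow> typed B \<Longrightarrow> typed A' \<Longrightarrow> typed B' \<Longrightarrow> typed r \<Longrightarrow>
   tgt B = src A \<Longrightarrow> tgt B' = src A' \<Longrightarrow> tgt r = src B \<Longrightarrow> tgt r = src B' \<Longrightarrow> A \<odot> (B \<odot> r) = A' \<odot> (B' \<odot> r)"
  using acomp_assoc[of r B A] acomp_assoc[of r B' A'] by simp
lemma acomp_eq_ctx1: "A \<odot> B = A' \<Longrightarrow> typed A \<Longrightarrow> typed B \<Longrightarrow> typed r \<Longrightarrow>
   tgt B = src A \<Longrightarrow> tgt r = src B \<Longrightarrow> A \<odot> (B \<odot> r) = A' \<odot> r"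
  using acomp_assoc[of r B A] by simp

lemma ida_2_split: "ida 2 = ida (Suc 0) \<boxtimes> ida (Suc 0)"
  using ida_atens_ida[of "Suc 0" "Suc 0"] by simp

end

section \<open>Hopf algebras with a normalized integral and cointegral\<close>

locale hopf_with_integrals = tensor_powers C H for C :: "('o,'m) smc" and H +
  fixes m u d e S Lam lam
  assumes hopf: "is_hopf_algebra C H m u d e S"
  and Lam_hom: "Lam \<in> Hom C (Uo C) H" and lam_hom: "lam \<in> Hom C H (Uo C)"
  and left_integral: "Cmp C m (TM C (Idm C H) Lam) = Cmp C Lam e"
  and right_cointegral: "Cmp C (TM C lam (Idm C H)) d = Cmp C u lam"
  and normalized: "Cmp C lam Lam = Idm C (Uo C)"
begin

lemma hopf_equations:
 "m \<in> Hom C (TO C H H) H" "u \<in> Hom C (Uo C) H"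
 "Cmp C m (TM C m (Idm C H)) = Cmp C m (TM C (Idm C H) m)"
 "Cmp C m (TM C u (Idm C H)) = Idm C H" "Cmp C m (TM C (Idm C H) u) = Idm C H"
 "d \<in> Hom C H (TO C H H)" "e \<in> Hom C H (Uo C)"
 "Cmp C (TM C d (Idm C H)) d = Cmp C (TM C (Idm C H) d) d"
 "Cmp C (TM C e (Idm C H)) d = Idm C H" "Cmp C (TM C (Idm C H) e) d = Idm C H"
 "S \<in> Hom C H H"
 "Cmp C d m = Cmp C (TM C m m) (Cmp C (TM C (Idm C H) (TM C (Br C H H) (Idm C H))) (TM C d d))"
 "Cmp C d u = TM C u u" "Cmp C e m = TM C e e" "Cmp C e u = Idm C (Uo C)"
 "Cmp C m (Cmp C (TM C S (Idm C H)) d) = Cmp C u e"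
 "Cmp C m (Cmp C (TM C (Idm C H) S) d) = Cmp C u e"
  using hopf unfolding is_hopf_algebra_def is_algebra_def is_coalgebra_def by auto

abbreviation "mm \<equiv> Arr 2 (Suc 0) m"
abbreviation "uu \<equiv> Arr 0 (Suc 0) u"
abbreviation "dd \<equiv> Arr (Suc 0) 2 d"
abbreviation "ee \<equiv> Arr (Suc 0) 0 e"
abbreviation "SS \<equiv> Arr (Suc 0) (Suc 0) S"
abbreviation "LL \<equiv> Arr 0 (Suc 0) Lam"
abbreviation "ll \<equiv> Arr (Suc 0) 0 lam"
abbreviation "ii \<equiv> ida (Suc 0)"
abbreviation "cc \<equiv> braid (Suc 0) (Suc 0)"

lemma typed_structure_maps[simp]: "typed mm" "typed uu"
  "typed dd" "typed ee" "typed SS" "typed LL" "typed ll"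
  unfolding typed_def using hopf_equations Lam_hom lam_hom by (simp_all add: pow_2)

lemma mul_assoc: "mm \<odot> (mm \<boxtimes> ii) = mm \<odot> (ii \<boxtimes> mm)"
  by (intro arr_eqI) (simp_all add: hopf_equations)

lemma mul_unit_left: "mm \<odot> (uu \<boxtimes> ii) = ii"
  by (intro arr_eqI) (simp_all add: hopf_equations)

lemma mul_unit_right: "mm \<odot> (ii \<boxtimes> uu) = ii"
  by (intro arr_eqI) (simp_all add: hopf_equations)

lemma comul_coassoc: "(dd \<boxtimes> ii) \<odot> dd = (ii \<boxtimes> dd) \<odot> dd"
  by (intro arr_eqI) (simp_all add: hopf_equations)

lemma comul_counit_left: "(ee \<boxtimes> ii) \<odot> dd = ii"
  by (intro arr_eqI) (simp_all add: hopf_equations)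

lemma comul_counit_right: "(ii \<boxtimes> ee) \<odot> dd = ii"
  by (intro arr_eqI) (simp_all add: hopf_equations)

lemma comul_mul: "dd \<odot> mm = (mm \<boxtimes> mm) \<odot> (ii \<boxtimes> cc \<boxtimes> ii) \<odot> (dd \<boxtimes> dd)"
  by (intro arr_eqI) (simp_all add: hopf_equations braid_def)

lemma comul_unit: "dd \<odot> uu = uu \<boxtimes> uu"
  by (intro arr_eqI) (simp_all add: hopf_equations)

lemma counit_mul: "ee \<odot> mm = ee \<boxtimes> ee"
  by (intro arr_eqI) (simp_all add: hopf_equations)

lemma counit_unit: "ee \<odot> uu = ida 0"
  by (intro arr_eqI) (simp_all add: hopf_equations)

lemma antipode_left: "mm \<odot> (SS \<boxtimes> ii) \<odot> dd = uu \<odot> ee"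
  by (intro arr_eqI) (simp_all add: hopf_equations)

lemma antipode_right: "mm \<odot> (ii \<boxtimes> SS) \<odot> dd = uu \<odot> ee"
  by (intro arr_eqI) (simp_all add: hopf_equations)

lemma integral_left: "mm \<odot> (ii \<boxtimes> LL) = LL \<odot> ee"
  using left_integral by (intro arr_eqI) simp_all

lemma cointegral_right: "(ll \<boxtimes> ii) \<odot> dd = uu \<odot> ll"
  using right_cointegral by (intro arr_eqI) simp_all

lemma cointegral_integral: "ll \<odot> LL = ida 0"
  using normalized by (intro arr_eqI) simp_all

lemma ida_3_split_left: "ida 3 = ida 2 \<boxtimes> ii" using ida_atens_ida[of 2 "Suc 0"] by simp

lemma ida_3_split_right: "ida 3 = ii \<boxtimes> ida 2" using ida_atens_ida[of "Suc 0" 2] by simp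

lemma comul_coassoc_ctx: "typed r \<Longrightarrow> tgt r = Suc 0 \<Longrightarrow> (dd \<boxtimes> ii) \<odot> (dd \<odot> r) = (ii \<boxtimes> dd) \<odot> (dd \<odot> r)"
  by (rule acomp_eq_ctx[OF comul_coassoc]) simp_all

lemma comul_counit_right_ctx: "typed r \<Longrightarrow> tgt r = Suc 0 \<Longrightarrow> (ii \<boxtimes> ee) \<odot> (dd \<odot> r) = r"
  using acomp_eq_ctx1[OF comul_counit_right, of r] by (simp add: ida_acomp)

lemma mul_unit_effect:
  assumes "typed x" "tgt x = 0"
  shows "mm \<odot> ((uu \<odot> x) \<boxtimes> ii) = x \<boxtimes> ii"
proof -
  have "mm \<odot> ((uu \<odot> x) \<boxtimes> ii) = (mm \<odot> (uu \<boxtimes> ii)) \<odot> (x \<boxtimes> ii)"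
    using assms by (simp add: interchange ida_acomp acomp_ida acomp_assoc)
  then show ?thesis using assms by (simp add: mul_unit_left ida_acomp)
qed

lemma mul_ida_unit_effect:
  assumes "typed x" "tgt x = 0"
  shows "mm \<odot> (ii \<boxtimes> (uu \<odot> x)) = ii \<boxtimes> x"
proof -
  have "mm \<odot> (ii \<boxtimes> (uu \<odot> x)) = (mm \<odot> (ii \<boxtimes> uu)) \<odot> (ii \<boxtimes> x)"
    using assms by (simp add: interchange ida_acomp acomp_ida acomp_assoc)
  then show ?thesis using assms by (simp add: mul_unit_right ida_acomp)
qed

lemma counit_middle_comul: "(ii \<boxtimes> ee \<boxtimes> ii) \<odot> (dd \<boxtimes> ii) = ida 2"
proof -
  have "(ii \<boxtimes> ee \<boxtimes> ii) \<odot> (dd \<boxtimes> ii) = ((ii \<boxtimes> ee) \<odot> dd) \<boxtimes> ii"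
    by (simp add: atens_assoc[symmetric] interchange ida_acomp acomp_ida)
  then show ?thesis by (simp add: comul_counit_right ida_2_split)
qed

lemma comul_ida_mul_commute: "(dd \<boxtimes> ii) \<odot> (ii \<boxtimes> mm) = (ida 2 \<boxtimes> mm) \<odot> (dd \<boxtimes> ida 2)"
  by (simp add: arrow_normalize)

lemma comul_ida_comul: "(dd \<boxtimes> ida 2) \<odot> (dd \<boxtimes> ii) = (ii \<boxtimes> dd \<boxtimes> ii) \<odot> (dd \<boxtimes> ii)"
proof -
  have "(dd \<boxtimes> ida 2) \<odot> (dd \<boxtimes> ii) = ((dd \<boxtimes> ii) \<odot> dd) \<boxtimes> ii"
    by (simp add: ida_2_split atens_assoc[symmetric] interchange ida_acomp acomp_ida)
  also have "\<dots> = ((ii \<boxtimes> dd) \<odot> dd) \<boxtimes> ii" by (simp add: comul_coassoc)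
  also have "\<dots> = (ii \<boxtimes> dd \<boxtimes> ii) \<odot> (dd \<boxtimes> ii)"
    by (simp add: interchange ida_acomp acomp_ida atens_assoc[symmetric])
  finally show ?thesis .
qed

lemma mul_antipode_mul: "mm \<odot> (SS \<boxtimes> mm) = mm \<odot> ((mm \<odot> (SS \<boxtimes> ii)) \<boxtimes> ii)"
proof -
  have "mm \<odot> (SS \<boxtimes> mm) = (mm \<odot> (ii \<boxtimes> mm)) \<odot> (SS \<boxtimes> ida 2)"
    by (simp add: interchange interchange_ctx ida_acomp acomp_ida acomp_assoc)
  also have "\<dots> = (mm \<odot> (mm \<boxtimes> ii)) \<odot> (SS \<boxtimes> ida 2)"
    by (simp add: mul_assoc)
  also have "\<dots> = mm \<odot> ((mm \<odot> (SS \<boxtimes> ii)) \<boxtimes> ii)"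
    by (simp add: ida_2_split atens_assoc[symmetric] interchange ida_acomp acomp_ida acomp_assoc)
  finally show ?thesis .
qed

lemma antipode_mul_comul: "mm \<odot> (SS \<boxtimes> mm) \<odot> (dd \<boxtimes> ii) = ee \<boxtimes> ii"
proof -
  have "mm \<odot> (SS \<boxtimes> mm) \<odot> (dd \<boxtimes> ii) = mm \<odot> ((mm \<odot> (SS \<boxtimes> ii) \<odot> dd) \<boxtimes> ii)"
    by (simp add: acomp_eq_ctx1[OF mul_antipode_mul] interchange ida_acomp acomp_ida acomp_assoc)
  also have "\<dots> = ee \<boxtimes> ii" by (simp add: antipode_left mul_unit_effect)
  finally show ?thesis .
qed

lemma mul_mul_antipode: "mm \<odot> (mm \<boxtimes> SS) = mm \<odot> (ii \<boxtimes> (mm \<odot> (ii \<boxtimes> SS)))"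
proof -
  have "mm \<boxtimes> SS = (mm \<boxtimes> ii) \<odot> (ida 2 \<boxtimes> SS)"
    by (simp add: interchange ida_acomp acomp_ida)
  then have "mm \<odot> (mm \<boxtimes> SS) = mm \<odot> (mm \<boxtimes> ii) \<odot> (ida 2 \<boxtimes> SS)"
    by simp
  also have "\<dots> = mm \<odot> (ii \<boxtimes> mm) \<odot> (ida 2 \<boxtimes> SS)"
    by (simp add: acomp_assoc mul_assoc acomp_eq_ctx[OF mul_assoc])
  also have "\<dots> = mm \<odot> (ii \<boxtimes> (mm \<odot> (ii \<boxtimes> SS)))"
    by (simp add: ida_2_split atens_assoc interchange ida_acomp acomp_ida)
  finally show ?thesis .
qed

lemma mul_antipode_unit: "mm \<odot> (SS \<boxtimes> uu) = SS"
proof -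
  have "mm \<odot> (ii \<boxtimes> uu) \<odot> SS = mm \<odot> (SS \<boxtimes> uu)"
    by (simp add: absorb_state_right)
  then show ?thesis by (simp add: acomp_assoc[symmetric] mul_unit_right ida_acomp)
qed

lemma counit_antipode: "ee \<odot> SS = ee"
proof -
  have 1: "ee \<odot> (mm \<odot> (ii \<boxtimes> SS) \<odot> dd) = ee"
    by (simp add: antipode_right acomp_assoc[symmetric] counit_unit ida_acomp)
  have 2: "ee \<odot> (mm \<odot> (ii \<boxtimes> SS) \<odot> dd) = (ee \<boxtimes> (ee \<odot> SS)) \<odot> dd"
    by (simp add: acomp_assoc[symmetric] counit_mul interchange ida_acomp acomp_ida)
  have 3: "ee \<boxtimes> (ee \<odot> SS) = (ee \<odot> SS) \<odot> (ee \<boxtimes> ii)"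
    by (simp add: absorb_effect_left)
  have "ee = (ee \<odot> SS) \<odot> ((ee \<boxtimes> ii) \<odot> dd)"
    using 1 2 3 by (simp add: acomp_assoc[symmetric])
  then show ?thesis by (simp add: comul_counit_left acomp_ida)
qed

lemma braid_integral: "cc \<odot> (ii \<boxtimes> LL) = LL \<boxtimes> ii"
  using braid_natural[of ii LL "Suc 0" "Suc 0"] by (simp add: braid_0_right acomp_ida)

lemma cointegral_braid: "(ll \<boxtimes> ii) \<odot> cc = ii \<boxtimes> ll"
  using braid_natural[of ii ll "Suc 0" 0] by (simp add: braid_0_right ida_acomp)

lemma integral_left_comul: "(mm \<boxtimes> ii) \<odot> (ii \<boxtimes> cc) \<odot> (dd \<boxtimes> LL) = LL \<boxtimes> ii"
proof -
  have braid: "(ii \<boxtimes> cc) \<odot> (dd \<boxtimes> LL) = (ii \<boxtimes> LL \<boxtimes> ii) \<odot> dd"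
  proof -
    have "dd \<boxtimes> LL = (ida 2 \<boxtimes> LL) \<odot> dd" by (simp add: absorb_state_right)
    then have "(ii \<boxtimes> cc) \<odot> (dd \<boxtimes> LL) = ((ii \<boxtimes> cc) \<odot> (ida 2 \<boxtimes> LL)) \<odot> dd"
      by (simp add: acomp_assoc[symmetric])
    also have "(ii \<boxtimes> cc) \<odot> (ida 2 \<boxtimes> LL) = ii \<boxtimes> (cc \<odot> (ii \<boxtimes> LL))"
      by (simp add: arrow_normalize)
    finally show ?thesis by (simp add: braid_integral)
  qed
  have integral: "(mm \<boxtimes> ii) \<odot> (ii \<boxtimes> LL \<boxtimes> ii) \<odot> dd = LL \<boxtimes> ii"
  proof -
    have "(mm \<boxtimes> ii) \<odot> (ii \<boxtimes> LL \<boxtimes> ii) = (mm \<odot> (ii \<boxtimes> LL)) \<boxtimes> ii"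
      by (simp add: atens_assoc[symmetric] interchange ida_acomp acomp_ida)
    then have "(mm \<boxtimes> ii) \<odot> (ii \<boxtimes> LL \<boxtimes> ii) \<odot> dd = ((LL \<odot> ee) \<boxtimes> ii) \<odot> dd"
      by (simp add: acomp_assoc[symmetric] integral_left)
    also have "\<dots> = (LL \<boxtimes> ii) \<odot> (ee \<boxtimes> ii) \<odot> dd"
      by (simp add: interchange interchange_ctx ida_acomp acomp_ida acomp_assoc)
    also have "\<dots> = LL \<boxtimes> ii" by (simp add: comul_counit_left acomp_ida)
    finally show ?thesis .
  qed
  show ?thesis by (simp add: braid integral acomp_assoc)
qed

lemma cointegral_right_comul: "((ee \<boxtimes> ll) \<boxtimes> mm) \<odot> (ii \<boxtimes> cc \<boxtimes> ii) \<odot> (dd \<boxtimes> dd) = ii \<boxtimes> ll"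
proof -
  have a1: "ll \<boxtimes> mm = mm \<odot> (ll \<boxtimes> ida 2)" by (simp add: absorb_effect_left)
  have a2: "(ll \<boxtimes> ida 2) \<odot> (cc \<boxtimes> ii) = ((ll \<boxtimes> ii) \<odot> cc) \<boxtimes> ii"
    by (simp add: ida_2_split atens_assoc[symmetric] interchange ida_acomp acomp_ida)
  have a: "(ll \<boxtimes> mm) \<odot> (cc \<boxtimes> ii) = mm \<odot> (ii \<boxtimes> ll \<boxtimes> ii)"
    using a1 a2 cointegral_braid by (simp add: acomp_assoc atens_assoc)
  have b: "((ee \<boxtimes> ll) \<boxtimes> mm) \<odot> (ii \<boxtimes> cc \<boxtimes> ii) = ee \<boxtimes> (mm \<odot> (ii \<boxtimes> ll \<boxtimes> ii))"
    by (simp add: atens_assoc interchange ida_acomp acomp_ida a)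
  have c: "ee \<boxtimes> (mm \<odot> (ii \<boxtimes> ll \<boxtimes> ii)) = (mm \<odot> (ii \<boxtimes> ll \<boxtimes> ii)) \<odot> (ee \<boxtimes> ida 3)"
    by (simp add: absorb_effect_left)
  have d: "(ee \<boxtimes> ida 3) \<odot> (dd \<boxtimes> dd) = ii \<boxtimes> dd"
    by (simp add: ida_3_split_right atens_assoc[symmetric] interchange ida_acomp acomp_ida
        comul_counit_left)
  have e: "(mm \<odot> (ii \<boxtimes> ll \<boxtimes> ii)) \<odot> (ii \<boxtimes> dd) = ii \<boxtimes> ll"
    by (simp add: interchange ida_acomp acomp_ida acomp_assoc cointegral_right
        mul_ida_unit_effect)
  have "((ee \<boxtimes> ll) \<boxtimes> mm) \<odot> (ii \<boxtimes> cc \<boxtimes> ii) \<odot> (dd \<boxtimes> dd) = (ee \<boxtimes> (mm \<odot> (ii \<boxtimes> ll \<boxtimes> ii))) \<odot> (dd \<boxtimes> dd)"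
    by (simp add: acomp_assoc[symmetric] b)
  also have "\<dots> = (mm \<odot> (ii \<boxtimes> ll \<boxtimes> ii)) \<odot> (ee \<boxtimes> ida 3) \<odot> (dd \<boxtimes> dd)"
    by (simp add: c acomp_assoc)
  also have "\<dots> = ii \<boxtimes> ll" using d e by simp
  finally show ?thesis .
qed

section \<open>The Galois map and its inverse\<close>

definition galois :: "'m arr" where
  "galois = (ii \<boxtimes> mm) \<odot> (dd \<boxtimes> ii)"

definition galois_inv :: "'m arr" where
  "galois_inv = (ii \<boxtimes> mm) \<odot> (ii \<boxtimes> SS \<boxtimes> ii) \<odot> (dd \<boxtimes> ii)"

lemma typed_galois[simp]: "typed galois" "src galois = 2" "tgt galois = 2"
  unfolding galois_def by simp_all

lemma typed_galois_inv[simp]: "typed galois_inv" "src galois_inv = 2" "tgt galois_inv = 2"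
  unfolding galois_inv_def by simp_all

lemma galois_inv_galois: "galois_inv \<odot> galois = ida 2"
proof -
  have G1: "(ii \<boxtimes> SS \<boxtimes> ii) \<odot> (ida 2 \<boxtimes> mm) = ii \<boxtimes> SS \<boxtimes> mm"
    by (simp add: ida_2_split interchange ida_acomp acomp_ida atens_assoc)
  have G2: "(ii \<boxtimes> mm) \<odot> (ii \<boxtimes> SS \<boxtimes> mm) = ii \<boxtimes> (mm \<odot> (SS \<boxtimes> mm))"
    by (simp add: interchange ida_acomp acomp_ida)
  have G3: "(ii \<boxtimes> (mm \<odot> (SS \<boxtimes> mm))) \<odot> (ii \<boxtimes> dd \<boxtimes> ii) = ii \<boxtimes> (mm \<odot> (SS \<boxtimes> mm) \<odot> (dd \<boxtimes> ii))"
    by (simp add: interchange ida_acomp acomp_ida acomp_assoc)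
  have "galois_inv \<odot> galois = (ii \<boxtimes> mm) \<odot> (ii \<boxtimes> SS \<boxtimes> ii) \<odot> (ida 2 \<boxtimes> mm) \<odot> (dd \<boxtimes> ida 2) \<odot> (dd \<boxtimes> ii)"
    unfolding galois_inv_def galois_def
    by (simp add: acomp_assoc comul_ida_mul_commute acomp_eq_ctx[OF comul_ida_mul_commute])
  also have "\<dots> = (ii \<boxtimes> mm) \<odot> (ii \<boxtimes> SS \<boxtimes> mm) \<odot> (dd \<boxtimes> ida 2) \<odot> (dd \<boxtimes> ii)"
    by (simp add: acomp_assoc G1 acomp_eq_ctx1[OF G1])
  also have "\<dots> = ii \<boxtimes> (mm \<odot> (SS \<boxtimes> mm)) \<odot> (ii \<boxtimes> dd \<boxtimes> ii) \<odot> (dd \<boxtimes> ii)"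
    by (simp add: acomp_assoc G2 acomp_eq_ctx1[OF G2] comul_ida_comul)
  also have "\<dots> = ii \<boxtimes> (ee \<boxtimes> ii) \<odot> (dd \<boxtimes> ii)"
    by (simp add: acomp_assoc G3 acomp_eq_ctx1[OF G3] antipode_mul_comul)
  also have "\<dots> = ida 2" by (rule counit_middle_comul)
  finally show ?thesis .
qed

lemma galois_galois_inv: "galois \<odot> galois_inv = ida 2"
proof -
  have G1: "(ii \<boxtimes> mm) \<odot> (ida 2 \<boxtimes> mm) = ii \<boxtimes> (mm \<odot> (mm \<boxtimes> ii))"
    by (simp add: ida_2_split atens_assoc interchange ida_acomp acomp_ida mul_assoc)
  have G2: "(dd \<boxtimes> ida 2) \<odot> (ii \<boxtimes> SS \<boxtimes> ii) = dd \<boxtimes> SS \<boxtimes> ii"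
    by (simp add: ida_2_split interchange ida_acomp acomp_ida)
  have h2: "dd \<boxtimes> SS = (ida 2 \<boxtimes> SS) \<odot> (dd \<boxtimes> ii)"
    by (simp add: interchange ida_acomp acomp_ida)
  have G3: "(dd \<boxtimes> SS \<boxtimes> ii) \<odot> (dd \<boxtimes> ii) = (ii \<boxtimes> ((ii \<boxtimes> SS) \<odot> dd) \<boxtimes> ii) \<odot> (dd \<boxtimes> ii)"
  proof -
    have "(dd \<boxtimes> SS \<boxtimes> ii) \<odot> (dd \<boxtimes> ii) = ((dd \<boxtimes> SS) \<odot> dd) \<boxtimes> ii"
      by (simp add: atens_assoc[symmetric] interchange ida_acomp acomp_ida)
    also have "(dd \<boxtimes> SS) \<odot> dd = (ida 2 \<boxtimes> SS) \<odot> (ii \<boxtimes> dd) \<odot> dd"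
      using h2 comul_coassoc by (simp add: acomp_assoc)
    also have "\<dots> = (ii \<boxtimes> ((ii \<boxtimes> SS) \<odot> dd)) \<odot> dd"
      by (simp add: ida_2_split atens_assoc interchange interchange_ctx ida_acomp acomp_ida
          acomp_assoc)
    also have "((ii \<boxtimes> ((ii \<boxtimes> SS) \<odot> dd)) \<odot> dd) \<boxtimes> ii = (ii \<boxtimes> ((ii \<boxtimes> SS) \<odot> dd) \<boxtimes> ii) \<odot> (dd \<boxtimes> ii)"
      by (simp add: atens_assoc[symmetric] interchange ida_acomp acomp_ida)
    finally show ?thesis .
  qed
  have G4: "(ii \<boxtimes> (mm \<odot> (mm \<boxtimes> ii))) \<odot> (ii \<boxtimes> ((ii \<boxtimes> SS) \<odot> dd) \<boxtimes> ii) = ii \<boxtimes> (ee \<boxtimes> ii)"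
    by (simp add: interchange ida_acomp acomp_ida acomp_assoc antipode_right mul_unit_effect)
  have "galois \<odot> galois_inv = (ii \<boxtimes> mm) \<odot> (ida 2 \<boxtimes> mm) \<odot> (dd \<boxtimes> ida 2) \<odot> (ii \<boxtimes> SS \<boxtimes> ii) \<odot> (dd \<boxtimes> ii)"
    unfolding galois_inv_def galois_def
    by (simp add: acomp_assoc comul_ida_mul_commute acomp_eq_ctx[OF comul_ida_mul_commute])
  also have "\<dots> = ii \<boxtimes> (mm \<odot> (mm \<boxtimes> ii)) \<odot> (dd \<boxtimes> SS \<boxtimes> ii) \<odot> (dd \<boxtimes> ii)"
    by (simp add: acomp_assoc G1 acomp_eq_ctx1[OF G1] G2 acomp_eq_ctx1[OF G2])
  also have "\<dots> = ii \<boxtimes> (mm \<odot> (mm \<boxtimes> ii)) \<odot> (ii \<boxtimes> ((ii \<boxtimes> SS) \<odot> dd) \<boxtimes> ii) \<odot> (dd \<boxtimes> ii)"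
    by (simp add: acomp_assoc G3)
  also have "\<dots> = ii \<boxtimes> (ee \<boxtimes> ii) \<odot> (dd \<boxtimes> ii)"
    by (simp add: acomp_assoc G4 acomp_eq_ctx1[OF G4])
  also have "\<dots> = ida 2" by (rule counit_middle_comul)
  finally show ?thesis .
qed

lemma cointegral_galois: "(ll \<boxtimes> ii) \<odot> galois = ll \<boxtimes> ii"
proof -
  have "(ll \<boxtimes> ii) \<odot> galois = (ll \<boxtimes> mm) \<odot> (dd \<boxtimes> ii)"
    unfolding galois_def by (simp add: acomp_assoc[symmetric] interchange ida_acomp acomp_ida)
  also have "\<dots> = mm \<odot> (ll \<boxtimes> ida 2) \<odot> (dd \<boxtimes> ii)"
    by (simp add: absorb_effect_left absorb_effect_left_ctx acomp_assoc)
  also have "\<dots> = mm \<odot> (((ll \<boxtimes> ii) \<odot> dd) \<boxtimes> ii)"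
    by (simp add: ida_2_split atens_assoc[symmetric] interchange ida_acomp acomp_ida)
  also have "\<dots> = ll \<boxtimes> ii" by (simp add: cointegral_right mul_unit_effect)
  finally show ?thesis .
qed

section \<open>The Frobenius coproduct\<close>

definition frob_comul :: "'m arr" where
  "frob_comul = (mm \<boxtimes> SS) \<odot> (ii \<boxtimes> (dd \<odot> LL))"

definition copair :: "'m arr" where
  "copair = (ii \<boxtimes> SS) \<odot> dd \<odot> LL"

lemma typed_frob_comul[simp]: "typed frob_comul" "src frob_comul = Suc 0" "tgt frob_comul = 2"
  unfolding frob_comul_def by simp_all

lemma typed_copair[simp]: "typed copair" "src copair = 0" "tgt copair = 2"
  unfolding copair_def by simp_all

lemma galois_frob_comul: "galois \<odot> frob_comul = LL \<boxtimes> ii"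
proof -
  have T1: "(dd \<boxtimes> ii) \<odot> (mm \<boxtimes> SS) = ((mm \<boxtimes> mm) \<boxtimes> SS) \<odot> ((ii \<boxtimes> cc \<boxtimes> ii) \<boxtimes> ii) \<odot> ((dd \<boxtimes> dd) \<boxtimes> ii)"
    by (simp add: interchange ida_acomp acomp_ida acomp_assoc comul_mul)
  have T2: "(ii \<boxtimes> mm) \<odot> ((mm \<boxtimes> mm) \<boxtimes> SS) = mm \<boxtimes> (mm \<odot> (ii \<boxtimes> (mm \<odot> (ii \<boxtimes> SS))))"
    by (simp add: atens_assoc interchange ida_acomp acomp_ida mul_mul_antipode)
  have T3: "((dd \<boxtimes> dd) \<boxtimes> ii) \<odot> (ii \<boxtimes> (dd \<odot> LL)) = (ida 3 \<boxtimes> dd) \<odot> (dd \<boxtimes> (dd \<odot> LL))"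
    by (simp add: atens_assoc interchange ida_acomp acomp_ida comul_coassoc_ctx ida_3_split_left)
  have T4: "((ii \<boxtimes> cc \<boxtimes> ii) \<boxtimes> ii) \<odot> (ida 3 \<boxtimes> dd) = (ida 3 \<boxtimes> dd) \<odot> (ii \<boxtimes> cc \<boxtimes> ii)"
    by (simp add: arrow_normalize)
  have T5: "(mm \<boxtimes> (mm \<odot> (ii \<boxtimes> (mm \<odot> (ii \<boxtimes> SS))))) \<odot> (ida 3 \<boxtimes> dd) = mm \<boxtimes> (ii \<boxtimes> ee)"
    by (simp add: arrow_normalize antipode_right mul_ida_unit_effect)
  have T6: "mm \<boxtimes> (ii \<boxtimes> ee) = (mm \<boxtimes> ii) \<odot> (ida 3 \<boxtimes> ee)"
    by (simp add: arrow_normalize)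
  have T7: "(ida 3 \<boxtimes> ee) \<odot> (ii \<boxtimes> cc \<boxtimes> ii) = (ii \<boxtimes> cc) \<odot> (ida 3 \<boxtimes> ee)"
    by (simp add: arrow_normalize)
  have T8: "(ida 3 \<boxtimes> ee) \<odot> (dd \<boxtimes> (dd \<odot> LL)) = dd \<boxtimes> LL"
    by (simp add: arrow_normalize comul_counit_right_ctx)
  have "galois \<odot> frob_comul = (ii \<boxtimes> mm) \<odot> (dd \<boxtimes> ii) \<odot> (mm \<boxtimes> SS) \<odot> (ii \<boxtimes> (dd \<odot> LL))"
    unfolding galois_def frob_comul_def by (simp add: acomp_assoc)
  also have "\<dots> = (ii \<boxtimes> mm) \<odot> ((mm \<boxtimes> mm) \<boxtimes> SS) \<odot> ((ii \<boxtimes> cc \<boxtimes> ii) \<boxtimes> ii) \<odot> ((dd \<boxtimes> dd) \<boxtimes> ii) \<odot> (ii \<boxtimes> (dd \<odot> LL))"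
    by (simp add: acomp_assoc T1 acomp_eq_ctx1[OF T1])
  also have "\<dots> = (mm \<boxtimes> (mm \<odot> (ii \<boxtimes> (mm \<odot> (ii \<boxtimes> SS))))) \<odot> ((ii \<boxtimes> cc \<boxtimes> ii) \<boxtimes> ii) \<odot> ((dd \<boxtimes> dd) \<boxtimes> ii) \<odot> (ii \<boxtimes> (dd \<odot> LL))"
    by (simp add: acomp_assoc T2 acomp_eq_ctx1[OF T2])
  also have "\<dots> = (mm \<boxtimes> (mm \<odot> (ii \<boxtimes> (mm \<odot> (ii \<boxtimes> SS))))) \<odot> ((ii \<boxtimes> cc \<boxtimes> ii) \<boxtimes> ii) \<odot> (ida 3 \<boxtimes> dd) \<odot> (dd \<boxtimes> (dd \<odot> LL))"
    by (simp add: acomp_assoc T3)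
  also have "\<dots> = (mm \<boxtimes> (mm \<odot> (ii \<boxtimes> (mm \<odot> (ii \<boxtimes> SS))))) \<odot> (ida 3 \<boxtimes> dd) \<odot> (ii \<boxtimes> cc \<boxtimes> ii) \<odot> (dd \<boxtimes> (dd \<odot> LL))"
    by (simp add: acomp_assoc T4 acomp_eq_ctx[OF T4])
  also have "\<dots> = (mm \<boxtimes> (ii \<boxtimes> ee)) \<odot> (ii \<boxtimes> cc \<boxtimes> ii) \<odot> (dd \<boxtimes> (dd \<odot> LL))"
    by (simp add: acomp_assoc T5 acomp_eq_ctx1[OF T5])
  also have "\<dots> = (mm \<boxtimes> ii) \<odot> (ida 3 \<boxtimes> ee) \<odot> (ii \<boxtimes> cc \<boxtimes> ii) \<odot> (dd \<boxtimes> (dd \<odot> LL))"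
    by (simp add: T6 acomp_assoc)
  also have "\<dots> = (mm \<boxtimes> ii) \<odot> (ii \<boxtimes> cc) \<odot> (ida 3 \<boxtimes> ee) \<odot> (dd \<boxtimes> (dd \<odot> LL))"
    by (simp add: acomp_assoc T7 acomp_eq_ctx[OF T7])
  also have "\<dots> = (mm \<boxtimes> ii) \<odot> (ii \<boxtimes> cc) \<odot> (dd \<boxtimes> LL)"
    by (simp add: acomp_assoc T8)
  also have "\<dots> = LL \<boxtimes> ii" by (rule integral_left_comul)
  finally show ?thesis .
qed

lemma frob_comul_copair_left: "frob_comul = (ii \<boxtimes> mm) \<odot> (copair \<boxtimes> ii)"
proof -
  have "frob_comul = (galois_inv \<odot> galois) \<odot> frob_comul"
    by (simp add: galois_inv_galois ida_acomp)
  also have "\<dots> = galois_inv \<odot> (LL \<boxtimes> ii)"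
    by (simp add: acomp_assoc galois_frob_comul)
  also have "\<dots> = (ii \<boxtimes> mm) \<odot> (copair \<boxtimes> ii)"
    unfolding galois_inv_def copair_def
    by (simp add: atens_assoc[symmetric] interchange ida_acomp acomp_ida acomp_assoc)
  finally show ?thesis .
qed

lemma frob_comul_copair_right: "frob_comul = (mm \<boxtimes> ii) \<odot> (ii \<boxtimes> copair)"
proof -
  have "mm \<boxtimes> SS = (mm \<boxtimes> ii) \<odot> (ida 2 \<boxtimes> SS)"
    by (simp add: arrow_normalize)
  then have "frob_comul = (mm \<boxtimes> ii) \<odot> (ida 2 \<boxtimes> SS) \<odot> (ii \<boxtimes> (dd \<odot> LL))"
    unfolding frob_comul_def by (simp add: acomp_assoc)
  also have "\<dots> = (mm \<boxtimes> ii) \<odot> (ii \<boxtimes> copair)"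
    unfolding copair_def by (simp add: arrow_normalize)
  finally show ?thesis .
qed

lemma frob_comul_unit: "frob_comul \<odot> uu = copair"
proof -
  have 1: "frob_comul \<odot> uu = (mm \<boxtimes> ii) \<odot> (uu \<boxtimes> ida 2) \<odot> copair"
    by (simp add: frob_comul_copair_right acomp_assoc absorb_state_right absorb_state_left)
  have 2: "(mm \<boxtimes> ii) \<odot> (uu \<boxtimes> ida 2) = ida 2"
    by (simp add: ida_2_split atens_assoc[symmetric] interchange ida_acomp acomp_ida mul_unit_left)
  show ?thesis using 1 2 by (simp add: acomp_assoc[symmetric] ida_acomp)
qed

lemma frob_comul_integral: "frob_comul \<odot> LL = LL \<boxtimes> LL"
proof -
  have 1: "frob_comul \<odot> LL = (ii \<boxtimes> mm) \<odot> (ida 2 \<boxtimes> LL) \<odot> copair"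
    by (simp add: frob_comul_copair_left acomp_assoc absorb_state_right absorb_state_left)
  have integral_left_ctx:
      "typed r \<Longrightarrow> tgt r = Suc 0 \<Longrightarrow> mm \<odot> ((ii \<boxtimes> LL) \<odot> r) = LL \<odot> (ee \<odot> r)" for r
    using acomp_eq_ctx1[OF integral_left] by (simp add: acomp_assoc)
  have 2: "(ii \<boxtimes> mm) \<odot> (ida 2 \<boxtimes> LL) \<odot> copair = (ii \<boxtimes> (LL \<odot> ee)) \<odot> dd \<odot> LL"
    unfolding copair_def by (simp add: arrow_normalize integral_left_ctx counit_antipode)
  have 3: "(ii \<boxtimes> (LL \<odot> ee)) \<odot> dd \<odot> LL = (ii \<boxtimes> LL) \<odot> (ii \<boxtimes> ee) \<odot> dd \<odot> LL"
    by (simp add: interchange interchange_ctx ida_acomp acomp_ida acomp_assoc)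
  have 4: "(ii \<boxtimes> LL) \<odot> (ii \<boxtimes> ee) \<odot> dd \<odot> LL = LL \<boxtimes> LL"
    by (simp add: comul_counit_right_ctx absorb_state_right)
  show ?thesis using 1 2 3 4 by simp
qed

lemma frob_counit_left: "(ll \<boxtimes> ii) \<odot> frob_comul = ii"
proof -
  have "(ll \<boxtimes> ii) \<odot> frob_comul = ((ll \<boxtimes> ii) \<odot> galois) \<odot> frob_comul"
    by (simp add: cointegral_galois)
  also have "\<dots> = (ll \<boxtimes> ii) \<odot> (LL \<boxtimes> ii)"
    by (simp add: acomp_assoc galois_frob_comul)
  also have "\<dots> = ii" by (simp add: interchange ida_acomp cointegral_integral ida0_atens)
  finally show ?thesis .
qed

text \<open>Comparing the two descriptions of this map on \<open>id \<otimes> u\<close> shows that \<open>\<lambda>S\<close> is a left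
cointegral.\<close>
definition cointegral_pairing :: "'m arr" where
  "cointegral_pairing = ((ll \<odot> mm) \<boxtimes> ii) \<odot> (SS \<boxtimes> dd)"

lemma typed_cointegral_pairing[simp]: "typed cointegral_pairing" "src cointegral_pairing = 2"
  "tgt cointegral_pairing = Suc 0"
  unfolding cointegral_pairing_def by simp_all

lemma cointegral_pairing_galois: "cointegral_pairing \<odot> galois = ii \<boxtimes> ll"
proof -
  let ?K = "ll \<odot> mm \<odot> ((mm \<odot> (SS \<boxtimes> ii)) \<boxtimes> ii)"
  have W1: "(SS \<boxtimes> dd) \<odot> (ii \<boxtimes> mm) = (SS \<boxtimes> (mm \<boxtimes> mm)) \<odot> (ii \<boxtimes> (ii \<boxtimes> cc \<boxtimes> ii)) \<odot> (ii \<boxtimes> (dd \<boxtimes> dd))"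
    by (simp add: interchange interchange_ctx ida_acomp acomp_ida acomp_assoc comul_mul)
  have W2: "((ll \<odot> mm) \<boxtimes> ii) \<odot> (SS \<boxtimes> (mm \<boxtimes> mm)) = ?K \<boxtimes> mm"
    by (simp add: atens_assoc[symmetric] interchange ida_acomp acomp_ida acomp_assoc
        mul_antipode_mul)
  have W3: "(ii \<boxtimes> (dd \<boxtimes> dd)) \<odot> (dd \<boxtimes> ii) = (dd \<boxtimes> ii \<boxtimes> dd) \<odot> (dd \<boxtimes> ii)"
    by (simp add: atens_assoc[symmetric] interchange ida_acomp acomp_ida comul_coassoc)
  have W4: "(ii \<boxtimes> (ii \<boxtimes> cc \<boxtimes> ii)) \<odot> (dd \<boxtimes> ii \<boxtimes> dd) = (dd \<boxtimes> ida 3) \<odot> (ii \<boxtimes> cc \<boxtimes> ii) \<odot> (ii \<boxtimes> ii \<boxtimes> dd)"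
    by (simp add: arrow_normalize)
  have W5: "(?K \<boxtimes> mm) \<odot> (dd \<boxtimes> ida 3) = (?K \<odot> (dd \<boxtimes> ii)) \<boxtimes> mm"
    by (simp add: ida_3_split_right atens_assoc[symmetric] interchange ida_acomp acomp_ida)
  have W6: "?K \<odot> (dd \<boxtimes> ii) = ee \<boxtimes> ll"
    by (simp add: interchange ida_acomp acomp_ida acomp_assoc antipode_left mul_unit_effect
        absorb_effect_left)
  have W7: "(ii \<boxtimes> ii \<boxtimes> dd) \<odot> (dd \<boxtimes> ii) = dd \<boxtimes> dd"
    by (simp add: arrow_normalize)
  have "cointegral_pairing \<odot> galois = ((ll \<odot> mm) \<boxtimes> ii) \<odot> (SS \<boxtimes> dd) \<odot> (ii \<boxtimes> mm) \<odot> (dd \<boxtimes> ii)"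
    unfolding cointegral_pairing_def galois_def by (simp add: acomp_assoc)
  also have "\<dots> = ((ll \<odot> mm) \<boxtimes> ii) \<odot> (SS \<boxtimes> (mm \<boxtimes> mm)) \<odot> (ii \<boxtimes> (ii \<boxtimes> cc \<boxtimes> ii)) \<odot> (ii \<boxtimes> (dd \<boxtimes> dd)) \<odot> (dd \<boxtimes> ii)"
    by (simp add: acomp_assoc W1 acomp_eq_ctx1[OF W1])
  also have "\<dots> = (?K \<boxtimes> mm) \<odot> (ii \<boxtimes> (ii \<boxtimes> cc \<boxtimes> ii)) \<odot> (dd \<boxtimes> ii \<boxtimes> dd) \<odot> (dd \<boxtimes> ii)"
    by (simp add: acomp_assoc W2 acomp_eq_ctx1[OF W2] W3)
  also have "\<dots> = (?K \<boxtimes> mm) \<odot> (dd \<boxtimes> ida 3) \<odot> (ii \<boxtimes> cc \<boxtimes> ii) \<odot> (ii \<boxtimes> ii \<boxtimes> dd) \<odot> (dd \<boxtimes> ii)"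
    by (simp add: acomp_assoc W4 acomp_eq_ctx1[OF W4])
  also have "\<dots> = ((ee \<boxtimes> ll) \<boxtimes> mm) \<odot> (ii \<boxtimes> cc \<boxtimes> ii) \<odot> (ii \<boxtimes> ii \<boxtimes> dd) \<odot> (dd \<boxtimes> ii)"
    using W5 W6 by (simp add: acomp_assoc acomp_eq_ctx1[OF W5])
  also have "\<dots> = ((ee \<boxtimes> ll) \<boxtimes> mm) \<odot> (ii \<boxtimes> cc \<boxtimes> ii) \<odot> (dd \<boxtimes> dd)"
    by (simp add: acomp_assoc W7)
  also have "\<dots> = ii \<boxtimes> ll" by (rule cointegral_right_comul)
  finally show ?thesis .
qed

lemma cointegral_pairing_eq: "cointegral_pairing = (ii \<boxtimes> ll) \<odot> galois_inv"
proof -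
  have "cointegral_pairing = cointegral_pairing \<odot> (galois \<odot> galois_inv)"
    by (simp add: galois_galois_inv acomp_ida)
  also have "\<dots> = (ii \<boxtimes> ll) \<odot> galois_inv"
    by (simp add: acomp_assoc[symmetric] cointegral_pairing_galois)
  finally show ?thesis .
qed

lemma antipode_cointegral_left: "(ii \<boxtimes> (ll \<odot> SS)) \<odot> dd = (ll \<odot> SS) \<boxtimes> uu"
proof -
  have a: "cointegral_pairing \<odot> (ii \<boxtimes> uu) = (ll \<odot> SS) \<boxtimes> uu"
    unfolding cointegral_pairing_def
    by (simp add: acomp_assoc interchange interchange_ctx ida_acomp acomp_ida comul_unit
          atens_assoc[symmetric] mul_antipode_unit)
  have b1: "galois_inv \<odot> (ii \<boxtimes> uu) = (ii \<boxtimes> mm) \<odot> (ii \<boxtimes> SS \<boxtimes> ii) \<odot> (ida 2 \<boxtimes> uu) \<odot> dd"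
    unfolding galois_inv_def
    by (simp add: acomp_assoc interchange ida_acomp acomp_ida absorb_state_right)
  have b2: "(ii \<boxtimes> ll) \<odot> ((ii \<boxtimes> mm) \<odot> (ii \<boxtimes> SS \<boxtimes> ii) \<odot> (ida 2 \<boxtimes> uu) \<odot> dd) = (ii \<boxtimes> (ll \<odot> SS)) \<odot> dd"
    by (simp add: arrow_normalize mul_antipode_unit)
  have "cointegral_pairing \<odot> (ii \<boxtimes> uu) = (ii \<boxtimes> ll) \<odot> (galois_inv \<odot> (ii \<boxtimes> uu))"
    by (simp add: cointegral_pairing_eq acomp_assoc)
  then show ?thesis using a b1 b2 by simp
qed

lemma cointegral_right_frob_comul: "(ii \<boxtimes> ll) \<odot> frob_comul = ii \<boxtimes> (ll \<odot> SS \<odot> LL)"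
proof -
  have cointegral_comul: "typed r \<Longrightarrow> tgt r = Suc 0 \<Longrightarrow>
      (ii \<boxtimes> (ll \<odot> SS)) \<odot> (dd \<odot> r) = ((ll \<odot> SS) \<boxtimes> uu) \<odot> r" for r
    using acomp_eq_ctx1[OF antipode_cointegral_left] by simp
  have slide_unit: "(ll \<odot> SS) \<boxtimes> uu = uu \<odot> (ll \<odot> SS)"
    using absorb_effect_left[of uu "ll \<odot> SS" 0] by (simp add: atens_ida0)
  have "(ii \<boxtimes> ll) \<odot> frob_comul = (mm \<boxtimes> (ll \<odot> SS)) \<odot> (ii \<boxtimes> (dd \<odot> LL))"
    unfolding frob_comul_def by (simp add: acomp_assoc[symmetric] interchange ida_acomp acomp_ida)
  also have "\<dots> = mm \<odot> (ida 2 \<boxtimes> (ll \<odot> SS)) \<odot> (ii \<boxtimes> (dd \<odot> LL))"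
    by (simp add: absorb_effect_right absorb_effect_right_ctx acomp_assoc)
  also have "\<dots> = mm \<odot> (ii \<boxtimes> (((ll \<odot> SS) \<boxtimes> uu) \<odot> LL))"
    by (simp add: ida_atens_acomp_atens cointegral_comul)
  also have "\<dots> = (mm \<odot> (ii \<boxtimes> uu)) \<odot> (ii \<boxtimes> (ll \<odot> SS \<odot> LL))"
    by (simp add: slide_unit interchange ida_acomp acomp_ida acomp_assoc)
  also have "\<dots> = ii \<boxtimes> (ll \<odot> SS \<odot> LL)"
    by (simp add: mul_unit_right ida_acomp)
  finally show ?thesis .
qed

text \<open>Applying \<open>id \<otimes> \<lambda>\<close> to \<open>\<Delta>\<^sub>F\<Lambda> = \<Lambda> \<otimes> \<Lambda>\<close> gives \<open>\<Lambda> = \<Lambda> \<otimes> \<lambda>S\<Lambda>\<close>; now apply \<open>\<lambda>\<close>.\<close>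
lemma cointegral_antipode_integral: "ll \<odot> SS \<odot> LL = ida 0"
proof -
  let ?s = "ll \<odot> SS \<odot> LL"
  have "LL = (ii \<boxtimes> ll) \<odot> (LL \<boxtimes> LL)"
    by (simp add: interchange ida_acomp acomp_ida cointegral_integral atens_ida0)
  also have "\<dots> = ((ii \<boxtimes> ll) \<odot> frob_comul) \<odot> LL"
    by (simp add: frob_comul_integral[symmetric] acomp_assoc[symmetric])
  also have "\<dots> = LL \<boxtimes> ?s"
    using interchange[of LL ii "ida 0" ?s]
    by (simp add: cointegral_right_frob_comul ida_acomp acomp_ida atens_ida0)
  finally have "ll \<odot> LL = ll \<odot> (LL \<boxtimes> ?s)" by simp
  also have "\<dots> = (ll \<odot> LL) \<boxtimes> ?s"
    using interchange[of LL ll ?s "ida 0"] by (simp add: ida_acomp acomp_ida atens_ida0)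
  finally show ?thesis by (simp add: cointegral_integral ida0_atens)
qed

lemma frob_counit_right: "(ii \<boxtimes> ll) \<odot> frob_comul = ii"
  by (simp add: cointegral_right_frob_comul cointegral_antipode_integral atens_ida0)

lemma frobenius_ida_comul: "(mm \<boxtimes> ii) \<odot> (ii \<boxtimes> frob_comul) = frob_comul \<odot> mm"
proof -
  have r1: "frob_comul \<odot> mm = (mm \<boxtimes> ii) \<odot> (mm \<boxtimes> copair)"
    by (simp add: frob_comul_copair_right acomp_assoc absorb_state_right)
  have r2: "mm \<boxtimes> copair = (mm \<boxtimes> ida 2) \<odot> (ida 2 \<boxtimes> copair)"
    by (simp add: arrow_normalize)
  have r3: "(mm \<boxtimes> ii) \<odot> (mm \<boxtimes> ida 2) = (mm \<odot> (mm \<boxtimes> ii)) \<boxtimes> ii"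
    by (simp add: ida_2_split atens_assoc[symmetric] interchange ida_acomp acomp_ida)
  have R: "frob_comul \<odot> mm = ((mm \<odot> (mm \<boxtimes> ii)) \<boxtimes> ii) \<odot> (ida 2 \<boxtimes> copair)"
    using r1 r2 r3 by (simp add: acomp_assoc[symmetric])
  have l1: "ii \<boxtimes> ((mm \<boxtimes> ii) \<odot> (ii \<boxtimes> copair)) = (ii \<boxtimes> (mm \<boxtimes> ii)) \<odot> (ida 2 \<boxtimes> copair)"
    by (simp add: arrow_normalize)
  have l2: "(mm \<boxtimes> ii) \<odot> (ii \<boxtimes> (mm \<boxtimes> ii)) = (mm \<odot> (ii \<boxtimes> mm)) \<boxtimes> ii"
    by (simp add: atens_assoc[symmetric] interchange ida_acomp acomp_ida)
  have L: "(mm \<boxtimes> ii) \<odot> (ii \<boxtimes> frob_comul) = ((mm \<odot> (ii \<boxtimes> mm)) \<boxtimes> ii) \<odot> (ida 2 \<boxtimes> copair)"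
    using l1 l2 by (simp add: frob_comul_copair_right acomp_assoc[symmetric])
  show ?thesis using L R mul_assoc by simp
qed

lemma frobenius_comul_ida: "(ii \<boxtimes> mm) \<odot> (frob_comul \<boxtimes> ii) = frob_comul \<odot> mm"
proof -
  have r1: "frob_comul \<odot> mm = (ii \<boxtimes> mm) \<odot> (copair \<boxtimes> mm)"
    by (simp add: frob_comul_copair_left acomp_assoc absorb_state_left)
  have r2: "copair \<boxtimes> mm = (ida 2 \<boxtimes> mm) \<odot> (copair \<boxtimes> ida 2)"
    by (simp add: arrow_normalize)
  have r3: "(ii \<boxtimes> mm) \<odot> (ida 2 \<boxtimes> mm) = ii \<boxtimes> (mm \<odot> (ii \<boxtimes> mm))"
    by (simp add: ida_2_split atens_assoc interchange ida_acomp acomp_ida)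
  have R: "frob_comul \<odot> mm = (ii \<boxtimes> (mm \<odot> (ii \<boxtimes> mm))) \<odot> (copair \<boxtimes> ida 2)"
    using r1 r2 r3 by (simp add: acomp_assoc[symmetric])
  have l1: "((ii \<boxtimes> mm) \<odot> (copair \<boxtimes> ii)) \<boxtimes> ii = ((ii \<boxtimes> mm) \<boxtimes> ii) \<odot> ((copair \<boxtimes> ii) \<boxtimes> ii)"
    by (simp add: interchange ida_acomp acomp_ida)
  have l1': "(copair \<boxtimes> ii) \<boxtimes> ii = copair \<boxtimes> ida 2"
    by (simp add: atens_assoc ida_atens_ida)
  have l2: "(ii \<boxtimes> mm) \<odot> ((ii \<boxtimes> mm) \<boxtimes> ii) = ii \<boxtimes> (mm \<odot> (mm \<boxtimes> ii))"
    by (simp add: atens_assoc interchange ida_acomp acomp_ida)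
  have L: "(ii \<boxtimes> mm) \<odot> (frob_comul \<boxtimes> ii) = (ii \<boxtimes> (mm \<odot> (mm \<boxtimes> ii))) \<odot> (copair \<boxtimes> ida 2)"
  proof -
    have "(ii \<boxtimes> mm) \<odot> (frob_comul \<boxtimes> ii) = (ii \<boxtimes> mm) \<odot> (((ii \<boxtimes> mm) \<boxtimes> ii) \<odot> (copair \<boxtimes> ida 2))"
      using l1 l1' by (simp add: frob_comul_copair_left[symmetric])
    also have "\<dots> = (ii \<boxtimes> (mm \<odot> (mm \<boxtimes> ii))) \<odot> (copair \<boxtimes> ida 2)"
      using l2 by (simp add: acomp_assoc[symmetric])
    finally show ?thesis .
  qed
  show ?thesis using L R mul_assoc by simp
qed

lemma ida_frob_comul_frob_comul: "(ii \<boxtimes> frob_comul) \<odot> frob_comul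
    = (ii \<boxtimes> ((mm \<odot> (ii \<boxtimes> mm)) \<boxtimes> ii)) \<odot> (copair \<boxtimes> (ii \<boxtimes> copair))"
proof -
  have comul: "(ii \<boxtimes> frob_comul) \<odot> frob_comul = (ii \<boxtimes> (mm \<boxtimes> ii)) \<odot> (copair \<boxtimes> frob_comul)"
  proof -
    have "(ii \<boxtimes> frob_comul) \<odot> frob_comul = (ii \<boxtimes> frob_comul) \<odot> ((ii \<boxtimes> mm) \<odot> (copair \<boxtimes> ii))"
      using arg_cong[where f="\<lambda>z. (ii \<boxtimes> frob_comul) \<odot> z", OF frob_comul_copair_left] .
    also have "\<dots> = (ii \<boxtimes> (frob_comul \<odot> mm)) \<odot> (copair \<boxtimes> ii)"
      by (simp add: interchange_ctx ida_acomp)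
    also have "\<dots> = (ii \<boxtimes> ((mm \<boxtimes> ii) \<odot> (ii \<boxtimes> frob_comul))) \<odot> (copair \<boxtimes> ii)"
      by (simp add: frobenius_ida_comul)
    also have "\<dots> = (ii \<boxtimes> (mm \<boxtimes> ii)) \<odot> (ii \<boxtimes> (ii \<boxtimes> frob_comul)) \<odot> (copair \<boxtimes> ii)"
      by (simp add: interchange interchange_ctx ida_acomp acomp_ida)
    also have "(ii \<boxtimes> (ii \<boxtimes> frob_comul)) \<odot> (copair \<boxtimes> ii) = copair \<boxtimes> frob_comul"
      by (simp add: arrow_normalize)
    finally show ?thesis .
  qed
  have copairs: "(ii \<boxtimes> (mm \<boxtimes> ii)) \<odot> (copair \<boxtimes> frob_comul)
      = (ii \<boxtimes> ((mm \<odot> (ii \<boxtimes> mm)) \<boxtimes> ii)) \<odot> (copair \<boxtimes> (ii \<boxtimes> copair))"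
  proof -
    have h1: "copair \<boxtimes> frob_comul = (ida 2 \<boxtimes> (mm \<boxtimes> ii)) \<odot> (copair \<boxtimes> (ii \<boxtimes> copair))"
      using interchange[of copair "ida 2" "ii \<boxtimes> copair" "mm \<boxtimes> ii"]
      by (simp add: frob_comul_copair_right ida_acomp)
    have h2: "(ii \<boxtimes> (mm \<boxtimes> ii)) \<odot> (ida 2 \<boxtimes> (mm \<boxtimes> ii)) = ii \<boxtimes> ((mm \<odot> (ii \<boxtimes> mm)) \<boxtimes> ii)"
      by (simp add: atens_acomp_ida_atens atens_assoc[symmetric] interchange ida_acomp acomp_ida)
    show ?thesis using h1 h2 by (simp add: acomp_assoc[symmetric])
  qed
  show ?thesis using comul copairs by simp
qed

lemma frob_comul_ida_frob_comul: "(frob_comul \<boxtimes> ii) \<odot> frob_comul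
    = (ii \<boxtimes> ((mm \<odot> (mm \<boxtimes> ii)) \<boxtimes> ii)) \<odot> (copair \<boxtimes> (ii \<boxtimes> copair))"
proof -
  have comul: "(frob_comul \<boxtimes> ii) \<odot> frob_comul = (ii \<boxtimes> (mm \<boxtimes> ii)) \<odot> (frob_comul \<boxtimes> copair)"
  proof -
    have "(frob_comul \<boxtimes> ii) \<odot> frob_comul = (frob_comul \<boxtimes> ii) \<odot> ((mm \<boxtimes> ii) \<odot> (ii \<boxtimes> copair))"
      using arg_cong[where f="\<lambda>z. (frob_comul \<boxtimes> ii) \<odot> z", OF frob_comul_copair_right] .
    also have "\<dots> = ((frob_comul \<odot> mm) \<boxtimes> ii) \<odot> (ii \<boxtimes> copair)"
      by (simp add: interchange_ctx ida_acomp)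
    also have "\<dots> = (((ii \<boxtimes> mm) \<odot> (frob_comul \<boxtimes> ii)) \<boxtimes> ii) \<odot> (ii \<boxtimes> copair)"
      by (simp add: frobenius_comul_ida)
    also have "\<dots> = ((ii \<boxtimes> mm) \<boxtimes> ii) \<odot> ((frob_comul \<boxtimes> ii) \<boxtimes> ii) \<odot> (ii \<boxtimes> copair)"
      by (simp add: interchange interchange_ctx ida_acomp acomp_ida)
    also have "((frob_comul \<boxtimes> ii) \<boxtimes> ii) \<odot> (ii \<boxtimes> copair) = frob_comul \<boxtimes> copair"
      by (simp add: arrow_normalize)
    also have "(ii \<boxtimes> mm) \<boxtimes> ii = ii \<boxtimes> (mm \<boxtimes> ii)"
      by (simp add: atens_assoc)
    finally show ?thesis .
  qed
  have copairs: "(ii \<boxtimes> (mm \<boxtimes> ii)) \<odot> (frob_comul \<boxtimes> copair)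
      = (ii \<boxtimes> ((mm \<odot> (mm \<boxtimes> ii)) \<boxtimes> ii)) \<odot> (copair \<boxtimes> (ii \<boxtimes> copair))"
  proof -
    have h1: "frob_comul \<boxtimes> copair = ((ii \<boxtimes> mm) \<boxtimes> ida 2) \<odot> ((copair \<boxtimes> ii) \<boxtimes> copair)"
      using interchange[of "copair \<boxtimes> ii" "ii \<boxtimes> mm" copair "ida 2"]
      by (simp add: frob_comul_copair_left ida_acomp)
    have h1': "(copair \<boxtimes> ii) \<boxtimes> copair = copair \<boxtimes> (ii \<boxtimes> copair)"
      by (simp add: atens_assoc)
    have h2a: "(ii \<boxtimes> (mm \<boxtimes> ii)) \<odot> ((ii \<boxtimes> mm) \<boxtimes> ida 2) = ii \<boxtimes> ((mm \<boxtimes> ii) \<odot> (mm \<boxtimes> ida 2))"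
      by (simp add: atens_assoc interchange ida_acomp acomp_ida)
    have h2b: "(mm \<boxtimes> ii) \<odot> (mm \<boxtimes> ida 2) = (mm \<odot> (mm \<boxtimes> ii)) \<boxtimes> ii"
      by (simp add: ida_2_split atens_assoc[symmetric] interchange ida_acomp acomp_ida)
    have h2: "(ii \<boxtimes> (mm \<boxtimes> ii)) \<odot> ((ii \<boxtimes> mm) \<boxtimes> ida 2) = ii \<boxtimes> ((mm \<odot> (mm \<boxtimes> ii)) \<boxtimes> ii)"
      using h2a h2b by simp
    show ?thesis using h1 h1' h2 by (simp add: acomp_assoc[symmetric])
  qed
  show ?thesis using comul copairs by simp
qed

lemma frob_comul_coassoc: "(frob_comul \<boxtimes> ii) \<odot> frob_comul = (ii \<boxtimes> frob_comul) \<odot> frob_comul"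
  by (simp add: ida_frob_comul_frob_comul frob_comul_ida_frob_comul mul_assoc)

lemma frob_comul_natural:
  assumes "typed p" "src p = Suc 0" "tgt p = Suc 0"
    and mul: "p \<odot> mm = mm \<odot> (p \<boxtimes> p)" and antipode: "p \<odot> SS = SS \<odot> p"
    and comul: "dd \<odot> p = (p \<boxtimes> p) \<odot> dd" and integral: "p \<odot> LL = LL"
  shows "frob_comul \<odot> p = (p \<boxtimes> p) \<odot> frob_comul"
proof -
  have comul_integral: "(p \<boxtimes> p) \<odot> (dd \<odot> LL) = dd \<odot> LL"
  proof -
    have "(p \<boxtimes> p) \<odot> (dd \<odot> LL) = (dd \<odot> p) \<odot> LL"
      using assms(1-3) by (simp add: acomp_assoc[symmetric] comul)
    then show ?thesis using assms(1-3) by (simp add: acomp_assoc integral)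
  qed
  have "(p \<boxtimes> p) \<odot> frob_comul = (mm \<boxtimes> SS) \<odot> ((p \<boxtimes> p) \<boxtimes> p) \<odot> (ii \<boxtimes> (dd \<odot> LL))"
    unfolding frob_comul_def using assms(1-3) by (simp add: acomp_assoc[symmetric] interchange mul antipode)
  also have "\<dots> = (mm \<boxtimes> SS) \<odot> (p \<boxtimes> (dd \<odot> LL))"
    using assms(1-3) by (simp add: atens_assoc interchange acomp_ida comul_integral)
  also have "\<dots> = frob_comul \<odot> p"
    unfolding frob_comul_def using assms(1-3) by (simp add: acomp_assoc absorb_state_right)
  finally show ?thesis by simp
qed

lemma mor_frob_comul: "mor frob_comul = Cmp C (TM C m S) (TM C (Idm C H) (Cmp C d Lam))"
  by (simp add: frob_comul_def)

lemma is_frobenius_algebra_frob_comul: "is_frobenius_algebra C H m u (mor frob_comul) lam"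
proof -
  have "mor frob_comul \<in> Hom C H (TO C H H)"
    using typed_frob_comul by (simp add: typed_def pow_2)
  moreover note
    arg_cong[where f = mor, OF frob_comul_coassoc]
    arg_cong[where f = mor, OF frob_counit_left] arg_cong[where f = mor, OF frob_counit_right]
    arg_cong[where f = mor, OF frobenius_comul_ida] arg_cong[where f = mor, OF frobenius_ida_comul]
  ultimately show ?thesis
    using hopf lam_hom unfolding is_frobenius_algebra_def is_hopf_algebra_def is_coalgebra_def
    by (simp add: H_obj)
qed

lemma frob_comul_endo:
  assumes "is_integral_hopf_endo C H m u d e S Lam lam phi"
  shows "Cmp C (mor frob_comul) phi = Cmp C (TM C phi phi) (mor frob_comul)"
proof -
  let ?p = "Arr (Suc 0) (Suc 0) phi"
  have "frob_comul \<odot> ?p = (?p \<boxtimes> ?p) \<odot> frob_comul"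
    using assms unfolding is_integral_hopf_endo_def
    by (intro frob_comul_natural) (auto intro: arr_eqI simp: typed_def acomp_def atens_def)
  from arg_cong[where f = mor, OF this] show ?thesis by simp
qed

lemma mul_twist_frob_comul_unit:
  assumes "phi \<in> Hom C H H"
  shows "Cmp C m (Cmp C (TM C phi (Idm C H)) (Cmp C (mor frob_comul) u))
       = Cmp C m (Cmp C (TM C phi S) (Cmp C d Lam))"
proof -
  let ?p = "Arr (Suc 0) (Suc 0) phi"
  have "typed ?p" using assms by (simp add: typed_def)
  then have "mm \<odot> (?p \<boxtimes> ii) \<odot> (frob_comul \<odot> uu) = mm \<odot> (?p \<boxtimes> SS) \<odot> (dd \<odot> LL)"
    unfolding frob_comul_unit copair_def
    by (simp add: interchange_ctx ida_acomp acomp_ida acomp_assoc)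
  from arg_cong[where f = mor, OF this] show ?thesis by simp
qed

end

theorem mainTheorem17:
  fixes C :: "('o, 'm) smc" and H :: 'o
    and m u d e S Si Lam lam phi theta :: 'm
  assumes "strict_symmetric_monoidal_category C"
    and "is_extended_hopf_algebra C H m u d e S Si Lam lam phi theta"
  shows "is_extended_frobenius_structure C H m u
           (Cmp C (TM C m S) (TM C (Idm C H) (Cmp C d Lam))) lam phi theta"
proof -
  note extended = assms(2)[unfolded is_extended_hopf_algebra_def is_integral_hopf_algebra_def]
  have hopf: "is_hopf_algebra C H m u d e S"
    and endo: "is_integral_hopf_endo C H m u d e S Lam lam phi"
    using extended by blast+
  interpret hopf_with_integrals C H m u d e S Lam lam
    using assms(1) hopf extended
    by unfold_locales (auto simp: is_hopf_algebra_def is_algebra_def)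
  show ?thesis
    using is_frobenius_algebra_frob_comul frob_comul_endo[OF endo]
      mul_twist_frob_comul_unit[of phi] extended endo
    unfolding is_extended_frobenius_structure_def is_integral_hopf_endo_def mor_frob_comul
    by auto
qed

end
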